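(* Consider the Keyfitz–Kranzer system $\partial_t u_1 + \partial_x(u_1^2 - u_2) = 0$, $\partial_t u_2 + \partial_x(\tfrac{1}{3}u_1^3 - u_1) = 0$ with flux $f(u) = (u_1^2 - u_2,\ \tfrac13 u_1^3 - u_1)^T$ for $u=(u_1,u_2)\in\mathbb{R}^2$, entropy $U(u) = \exp(\tfrac12 u_1^2 - u_2)$, entropy variables $w(u) = (u_1 U(u),\ -U(u))^T$ and flux potential $\psi(u) = (\tfrac23 u_1^3 - u_1 u_2)\,U(u)$. For $u_-=(u_{1,-},u_{2,-})$, $u_+=(u_{1,+},u_{2,+})\in\mathbb{R}^2$ write $U_\pm = U(u_\pm)$ and define $f^{\mathrm{num}}(u_-,u_+) = (f^{\mathrm{num}}_1, f^{\mathrm{num}}_2)$ by \[ f^{\mathrm{num}}_1 = \tfrac16\bigl(u_{1,+}^2 + u_{1,+}u_{1,-} + u_{1,-}^2\bigr) + \tfrac12\bigl(\log U_+ + \log U_-\bigr), \] \[ f^{\mathrm{num}}_2 = \tfrac12(u_{1,+}+u_{1,-})\, f^{\mathrm{num}}_1 - \tfrac12\Bigl(\tfrac16 u_{1,+}^3 + u_{1,+}\log U_+ + \tfrac16 u_{1,-}^3 + u_{1,-}\log U_-\Bigr) - \frac{\tfrac12(U_+ + U_-)}{L(U_-,U_+)}\cdot \tfrac12(u_{1,+}+u_{1,-}), \] where $L(a,b) = \frac{b-a}{\log b - \log a}$ for $a\neq b$ and $L(a,a)=a$ (logarithmic mean, $a,b>0$). Then $f^{\mathrm{num}}$ is consistent,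 i.e. $f^{\mathrm{num}}(u,u) = f(u)$ for all $u\in\mathbb{R}^2$, and entropy-conservative, i.e. for all $u_-,u_+\in\mathbb{R}^2$, \[ \bigl(w(u_+) - w(u_-)\bigr)\cdot f^{\mathrm{num}}(u_-,u_+) = \psi(u_+) - \psi(u_-). \]
   Context: Here $\cdot$ denotes the Euclidean inner product on $\mathbb{R}^2$ and $\log$ is the natural logarithm; note $\log U(u) = \tfrac12 u_1^2 - u_2$. The convention $L(a,a)=a$ is the continuous extension of the logarithmic mean to the diagonal. *)

theory Defs
  imports "HOL-Analysis.Analysis"
begin

definition KK_flux :: "real \<times> real \<Rightarrow> real \<times> real" where
  "KK_flux u = (fst u ^ 2 - snd u, fst u ^ 3 / 3 - fst u)"

definition KK_U :: "real \<times> real \<Rightarrow> real" where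
  "KK_U u = exp (fst u ^ 2 / 2 - snd u)"

definition KK_w :: "real \<times> real \<Rightarrow> real \<times> real" where
  "KK_w u = (fst u * KK_U u, - KK_U u)"

definition KK_psi :: "real \<times> real \<Rightarrow> real" where
  "KK_psi u = (2/3 * fst u ^ 3 - fst u * snd u) * KK_U u"

definition logmean :: "real \<Rightarrow> real \<Rightarrow> real" where
  "logmean a b = (if a = b then a else (b - a) / (ln b - ln a))"

definition fnum :: "real \<times> real \<Rightarrow> real \<times> real \<Rightarrow> real \<times> real" where
  "fnum um up =
    (let a = fst um; b = fst up; Um = KK_U um; Up = KK_U up;
         f1 = (b^2 + b*a + a^2) / 6 + (ln Up + ln Um) / 2;
         f2 = (b + a) / 2 * f1
              - (b^3 / 6 + b * ln Up + a^3 / 6 + a * ln Um) / 2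
              - ((Up + Um) / 2) / logmean Um Up * ((b + a) / 2)
     in (f1, f2))"

end

theory Submission
  imports Defs
begin

text \<open>Write \<open>\<ell> = log U = u\<^sub>1\<^sup>2/2 - u\<^sub>2\<close>. Then \<open>\<psi> = (u\<^sub>1\<^sup>3/6 + u\<^sub>1 \<ell>) U\<close>, and the numerical flux
  is a polynomial in \<open>u\<^sub>1\<^sub>\<plusminus>, \<ell>\<^sub>\<plusminus>\<close> except for the factor \<open>q = ((U\<^sub>+ + U\<^sub>-)/2) / L(U\<^sub>-,U\<^sub>+)\<close>. The defining
  property of the logarithmic mean, \<open>(U\<^sub>+ - U\<^sub>-)/L(U\<^sub>-,U\<^sub>+) = \<ell>\<^sub>+ - \<ell>\<^sub>-\<close>, says
  \<open>(U\<^sub>+ - U\<^sub>-) q = (\<ell>\<^sub>+ - \<ell>\<^sub>-) (U\<^sub>+ + U\<^sub>-)/2\<close>, and the defect in the entropy-conservation identity is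
  \<open>(u\<^sub>1\<^sub>+ + u\<^sub>1\<^sub>-)/2\<close> times the defect in this relation. Consistency follows from \<open>L(U,U) = U\<close>.\<close>

lemma logmean_same [simp]: "logmean a a = a"
  by (simp add: logmean_def)

lemma logmean_diff_quotient:
  assumes "0 < a" "0 < b"
  shows "(b - a) / logmean a b = ln b - ln a"
proof (cases "a = b")
  case False
  with assms have "ln b \<noteq> ln a" by simp
  with False show ?thesis by (simp add: logmean_def)
qed simp

lemma entropy_conservation_identity:
  fixes a b Um Up lm lp q :: real
  assumes "(Up - Um) * q = (lp - lm) * (Up + Um) / 2"
  defines "f1 \<equiv> (b^2 + b*a + a^2) / 6 + (lp + lm) / 2"
  shows "(b*Up - a*Um) * f1
           + (Um - Up) * ((b + a) / 2 * f1 - (b^3/6 + b*lp + a^3/6 + a*lm) / 2 - q * ((b + a) / 2))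
         = (b^3/6 + b*lp) * Up - (a^3/6 + a*lm) * Um"
proof -
  have balance: "(Up - Um) * q - (lp - lm) * (Up + Um) / 2 = 0"
    using assms(1) by simp
  have "(b*Up - a*Um) * f1
           + (Um - Up) * ((b + a) / 2 * f1 - (b^3/6 + b*lp + a^3/6 + a*lm) / 2 - q * ((b + a) / 2))
         - ((b^3/6 + b*lp) * Up - (a^3/6 + a*lm) * Um)
        = (b + a) / 2 * ((Up - Um) * q - (lp - lm) * (Up + Um) / 2)"
    unfolding f1_def by (simp add: field_simps power2_eq_square power3_eq_cube)
  then show ?thesis
    unfolding balance mult_zero_right right_minus_eq .
qed

lemma KK_U_pos: "0 < KK_U u"
  by (simp add: KK_U_def)

lemma ln_KK_U: "ln (KK_U u) = fst u ^ 2 / 2 - snd u"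
  by (simp add: KK_U_def)

lemma KK_psi_eq_ln_KK_U: "KK_psi u = (fst u ^ 3 / 6 + fst u * ln (KK_U u)) * KK_U u"
  by (simp add: KK_psi_def ln_KK_U algebra_simps power2_eq_square power3_eq_cube)

lemma fnum_consistent: "fnum u u = KK_flux u"
proof -
  have "KK_U u \<noteq> 0"
    using KK_U_pos[of u] by simp
  then show ?thesis
    by (simp add: fnum_def KK_flux_def Let_def ln_KK_U field_simps power2_eq_square power3_eq_cube)
qed

lemma fnum_entropy_conservative:
  "inner (KK_w up - KK_w um) (fnum um up) = KK_psi up - KK_psi um"
proof -
  define Um Up where "Um = KK_U um" and "Up = KK_U up"
  have "(Up - Um) / logmean Um Up = ln Up - ln Um"
    unfolding Um_def Up_def by (intro logmean_diff_quotient KK_U_pos)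
  then have "(Up - Um) * ((Up + Um) / 2 / logmean Um Up) = (ln Up - ln Um) * (Up + Um) / 2"
    by (metis times_divide_eq_left times_divide_eq_right)
  from entropy_conservation_identity[OF this, of "fst up" "fst um"] show ?thesis
    unfolding fnum_def KK_w_def KK_psi_eq_ln_KK_U Let_def Um_def[symmetric] Up_def[symmetric]
    by simp
qed

theorem mainTheorem1:
  shows "(\<forall>u. fnum u u = KK_flux u) \<and>
         (\<forall>um up. inner (KK_w up - KK_w um) (fnum um up) = KK_psi up - KK_psi um)"
  by (simp add: fnum_consistent fnum_entropy_conservative)

end
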